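(* Let $(V,\{\nu_n\})$ be an $L^\infty$-MOS and $S\subseteq V$ a subspace. Then $S$ is the kernel of a completely gauge-bounded linear map $\phi:V\to W$ into some $L^\infty$-MOS $(W,\{\omega_n\})$ if and only if $S$ is an $L^\infty$-MOS ideal of $V$. In the latter case the quotient map $\pi:V\to V/S$ is completely gauge-contractive with respect to the quotient gauges $q_n(A+M_n(S)_{sa})=\inf\{\nu_n(B):B\in A+M_n(S)_{sa}\}$, and $\ker\pi=S$.
   Context: An $L^\infty$-MOS is a complex $*$-vector space $V$ ($M_n(V)$ with $(x_{ij})^*=(x_{ji}^* )$, self-adjoint part $M_n(V)_{sa}$) with proper gauges $\nu_n:M_n(V)_{sa}\to[0,\infty)$ (subadditive, positively homogeneous, $\nu_n(A)=\nu_n(-A)=0\Rightarrow A=0$) such that $\nu_k(X^*AX)\le\|X\|^2\nu_n(A)$ for scalar $X\in M_{n,k}$ and $\nu_{n+k}(A\oplus B)=\max\{\nu_n(A),\nu_k(B)\}$. A linear map $\phi:(V,\{\nu_n\})\to(W,\{\omega_n\})$ is completely gauge-bounded if $\phi(x^* )=\phi(x)^*$ and there is $C>0$ with $\omega_n(\phi^{(n)}(A))\le C\nu_n(A)$ for all $n$, $A\in M_n(V)_{sa}$; completely gauge-contractive if $C=1$ works. For a gauged real vector space $(E,\nu)$, a subspace $T$ is a gauge ideal if whenever $x\in E$ and sequences $(a_j),(b_j)\subseteq T$ satisfy $\nu(x-a_j)\to0$ and $\nu(b_j-x)\to0$, then $x\in T$. A self-adjoint subspace $S\subseteq V$ is an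 $L^\infty$-MOS ideal if $S\cap V_{sa}$ is a gauge ideal of $(V_{sa},\nu_1)$. $V/S$ has involution $(x+S)^*=x^*+S$ and $M_n(V/S)_{sa}$ is identified with $M_n(V)_{sa}/M_n(S)_{sa}$. *)

theory Defs
  imports "HOL-Analysis.Analysis"
begin

definition star_space :: "(complex \<Rightarrow> 'v::ab_group_add \<Rightarrow> 'v) \<Rightarrow> ('v \<Rightarrow> 'v) \<Rightarrow> bool" where
  "star_space sc st \<longleftrightarrow> vector_space sc \<and> (\<forall>x. st (st x) = x) \<and>
     (\<forall>x y. st (x + y) = st x + st y) \<and> (\<forall>c x. st (sc c x) = sc (cnj c) (st x))"

text \<open>n x n matrices over 'v are functions nat => nat => 'v vanishing outside {0..<n}^2.\<close>

definition is_mat :: "nat \<Rightarrow> (nat \<Rightarrow> nat \<Rightarrow> 'v::zero) \<Rightarrow> bool" where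
  "is_mat n A \<longleftrightarrow> (\<forall>i j. \<not> (i < n \<and> j < n) \<longrightarrow> A i j = 0)"

definition mstar :: "('v \<Rightarrow> 'v) \<Rightarrow> (nat \<Rightarrow> nat \<Rightarrow> 'v) \<Rightarrow> (nat \<Rightarrow> nat \<Rightarrow> 'v)" where
  "mstar st A = (\<lambda>i j. st (A j i))"

definition sa_mat :: "('v::zero \<Rightarrow> 'v) \<Rightarrow> nat \<Rightarrow> (nat \<Rightarrow> nat \<Rightarrow> 'v) \<Rightarrow> bool" where
  "sa_mat st n A \<longleftrightarrow> is_mat n A \<and> mstar st A = A"

definition madd :: "(nat \<Rightarrow> nat \<Rightarrow> 'v::plus) \<Rightarrow> (nat \<Rightarrow> nat \<Rightarrow> 'v) \<Rightarrow> (nat \<Rightarrow> nat \<Rightarrow> 'v)" where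
  "madd A B = (\<lambda>i j. A i j + B i j)"

definition mneg :: "(nat \<Rightarrow> nat \<Rightarrow> 'v::uminus) \<Rightarrow> (nat \<Rightarrow> nat \<Rightarrow> 'v)" where
  "mneg A = (\<lambda>i j. - A i j)"

definition msub :: "(nat \<Rightarrow> nat \<Rightarrow> 'v::minus) \<Rightarrow> (nat \<Rightarrow> nat \<Rightarrow> 'v) \<Rightarrow> (nat \<Rightarrow> nat \<Rightarrow> 'v)" where
  "msub A B = (\<lambda>i j. A i j - B i j)"

definition mscale :: "(complex \<Rightarrow> 'v \<Rightarrow> 'v) \<Rightarrow> complex \<Rightarrow> (nat \<Rightarrow> nat \<Rightarrow> 'v) \<Rightarrow> (nat \<Rightarrow> nat \<Rightarrow> 'v)" where
  "mscale sc c A = (\<lambda>i j. sc c (A i j))"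

definition mmap :: "('v \<Rightarrow> 'w) \<Rightarrow> (nat \<Rightarrow> nat \<Rightarrow> 'v) \<Rightarrow> (nat \<Rightarrow> nat \<Rightarrow> 'w)" where
  "mmap f A = (\<lambda>i j. f (A i j))"

text \<open>Compression X^* A X for a scalar n x k matrix X (entries X i j, i < n, j < k).\<close>
definition compress :: "(complex \<Rightarrow> 'v::comm_monoid_add \<Rightarrow> 'v) \<Rightarrow> nat \<Rightarrow> nat \<Rightarrow>
    (nat \<Rightarrow> nat \<Rightarrow> complex) \<Rightarrow> (nat \<Rightarrow> nat \<Rightarrow> 'v) \<Rightarrow> (nat \<Rightarrow> nat \<Rightarrow> 'v)" where
  "compress sc n k X A = (\<lambda>a b. if a < k \<and> b < k then
      (\<Sum>i<n. \<Sum>j<n. sc (cnj (X i a) * X j b) (A i j)) else 0)"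

definition opnorm :: "nat \<Rightarrow> nat \<Rightarrow> (nat \<Rightarrow> nat \<Rightarrow> complex) \<Rightarrow> real" where
  "opnorm n k X = Sup {sqrt (\<Sum>i<n. (cmod (\<Sum>j<k. X i j * v j))\<^sup>2) | v.
                         (\<Sum>j<k. (cmod (v j))\<^sup>2) \<le> 1}"

definition dsum :: "nat \<Rightarrow> nat \<Rightarrow> (nat \<Rightarrow> nat \<Rightarrow> 'v::zero) \<Rightarrow> (nat \<Rightarrow> nat \<Rightarrow> 'v) \<Rightarrow> (nat \<Rightarrow> nat \<Rightarrow> 'v)" where
  "dsum n k A B = (\<lambda>i j. if i < n \<and> j < n then A i j
      else if n \<le> i \<and> n \<le> j \<and> i < n + k \<and> j < n + k then B (i - n) (j - n) else 0)"

text \<open>The gauge axioms for a family nu_n on M_n(V)_sa (n >= 1); properness is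
  formulated relative to a predicate Z n A saying "A is zero" (for V itself,
  Z n A is A = 0; for a quotient V/S, Z n A says A lies in M_n(S)).\<close>
definition mos_gauges :: "(complex \<Rightarrow> 'v::ab_group_add \<Rightarrow> 'v) \<Rightarrow> ('v \<Rightarrow> 'v) \<Rightarrow>
    (nat \<Rightarrow> (nat \<Rightarrow> nat \<Rightarrow> 'v) \<Rightarrow> real) \<Rightarrow> (nat \<Rightarrow> (nat \<Rightarrow> nat \<Rightarrow> 'v) \<Rightarrow> bool) \<Rightarrow> bool" where
  "mos_gauges sc st \<nu> Z \<longleftrightarrow>
     (\<forall>n\<ge>1. \<forall>A. sa_mat st n A \<longrightarrow> 0 \<le> \<nu> n A) \<and>
     (\<forall>n\<ge>1. \<forall>A B. sa_mat st n A \<longrightarrow> sa_mat st n B \<longrightarrow> \<nu> n (madd A B) \<le> \<nu> n A + \<nu> n B) \<and>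
     (\<forall>n\<ge>1. \<forall>A. \<forall>t::real. sa_mat st n A \<longrightarrow> t > 0 \<longrightarrow> \<nu> n (mscale sc (complex_of_real t) A) = t * \<nu> n A) \<and>
     (\<forall>n\<ge>1. \<forall>A. sa_mat st n A \<longrightarrow> \<nu> n A = 0 \<longrightarrow> \<nu> n (mneg A) = 0 \<longrightarrow> Z n A) \<and>
     (\<forall>n\<ge>1. \<forall>k\<ge>1. \<forall>X A. sa_mat st n A \<longrightarrow>
         \<nu> k (compress sc n k X A) \<le> (opnorm n k X)\<^sup>2 * \<nu> n A) \<and>
     (\<forall>n\<ge>1. \<forall>k\<ge>1. \<forall>A B. sa_mat st n A \<longrightarrow> sa_mat st k B \<longrightarrow>
         \<nu> (n + k) (dsum n k A B) = max (\<nu> n A) (\<nu> k B))"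

definition linf_mos :: "(complex \<Rightarrow> 'v::ab_group_add \<Rightarrow> 'v) \<Rightarrow> ('v \<Rightarrow> 'v) \<Rightarrow>
    (nat \<Rightarrow> (nat \<Rightarrow> nat \<Rightarrow> 'v) \<Rightarrow> real) \<Rightarrow> bool" where
  "linf_mos sc st \<nu> \<longleftrightarrow> star_space sc st \<and> mos_gauges sc st \<nu> (\<lambda>n A. A = (\<lambda>i j. 0))"

definition cg_bounded :: "(complex \<Rightarrow> 'v::ab_group_add \<Rightarrow> 'v) \<Rightarrow> ('v \<Rightarrow> 'v) \<Rightarrow>
    (nat \<Rightarrow> (nat \<Rightarrow> nat \<Rightarrow> 'v) \<Rightarrow> real) \<Rightarrow>
    (complex \<Rightarrow> 'w::ab_group_add \<Rightarrow> 'w) \<Rightarrow> ('w \<Rightarrow> 'w) \<Rightarrow>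
    (nat \<Rightarrow> (nat \<Rightarrow> nat \<Rightarrow> 'w) \<Rightarrow> real) \<Rightarrow> ('v \<Rightarrow> 'w) \<Rightarrow> bool" where
  "cg_bounded scV stV \<nu> scW stW \<omega> \<phi> \<longleftrightarrow> Vector_Spaces.linear scV scW \<phi> \<and>
     (\<forall>x. \<phi> (stV x) = stW (\<phi> x)) \<and>
     (\<exists>C>0. \<forall>n\<ge>1. \<forall>A. sa_mat stV n A \<longrightarrow> \<omega> n (mmap \<phi> A) \<le> C * \<nu> n A)"

definition gauge_ideal :: "'v::ab_group_add set \<Rightarrow> ('v \<Rightarrow> real) \<Rightarrow> 'v set \<Rightarrow> bool" where
  "gauge_ideal E g T \<longleftrightarrow> (\<forall>x\<in>E. \<forall>a b::nat \<Rightarrow> 'v.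
      (\<forall>j. a j \<in> T) \<longrightarrow> (\<forall>j. b j \<in> T) \<longrightarrow>
      (\<lambda>j. g (x - a j)) \<longlonglongrightarrow> 0 \<longrightarrow> (\<lambda>j. g (b j - x)) \<longlonglongrightarrow> 0 \<longrightarrow> x \<in> T)"

definition m1 :: "'v::zero \<Rightarrow> (nat \<Rightarrow> nat \<Rightarrow> 'v)" where
  "m1 x = (\<lambda>i j. if i = 0 \<and> j = 0 then x else 0)"

definition mos_ideal :: "(complex \<Rightarrow> 'v::ab_group_add \<Rightarrow> 'v) \<Rightarrow> ('v \<Rightarrow> 'v) \<Rightarrow>
    (nat \<Rightarrow> (nat \<Rightarrow> nat \<Rightarrow> 'v) \<Rightarrow> real) \<Rightarrow> 'v set \<Rightarrow> bool" where
  "mos_ideal sc st \<nu> S \<longleftrightarrow> module.subspace sc S \<and> (\<forall>x\<in>S. st x \<in> S) \<and>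
     gauge_ideal {x. st x = x} (\<lambda>x. \<nu> 1 (m1 x)) (S \<inter> {x. st x = x})"

definition sa_mat_in :: "('v::zero \<Rightarrow> 'v) \<Rightarrow> nat \<Rightarrow> 'v set \<Rightarrow> (nat \<Rightarrow> nat \<Rightarrow> 'v) \<Rightarrow> bool" where
  "sa_mat_in st n S C \<longleftrightarrow> sa_mat st n C \<and> (\<forall>i j. C i j \<in> S)"

text \<open>Quotient gauge q_n(A + M_n(S)_sa) = inf { nu_n(B) : B in A + M_n(S)_sa },
  written as a function of the representative A.\<close>
definition qgauge :: "('v::ab_group_add \<Rightarrow> 'v) \<Rightarrow> (nat \<Rightarrow> (nat \<Rightarrow> nat \<Rightarrow> 'v) \<Rightarrow> real) \<Rightarrow>
    'v set \<Rightarrow> nat \<Rightarrow> (nat \<Rightarrow> nat \<Rightarrow> 'v) \<Rightarrow> real" where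
  "qgauge st \<nu> S n A = Inf {\<nu> n B | B. sa_mat st n B \<and> sa_mat_in st n S (msub B A)}"

definition qmap :: "'v set \<Rightarrow> 'v::ab_group_add \<Rightarrow> 'v set" where
  "qmap S x = (\<lambda>s. x + s) ` S"

text \<open>(V/S, {q_n}) is an L^infinity-MOS, expressed through representatives using the
  identification M_n(V/S)_sa = M_n(V)_sa / M_n(S)_sa: the involution is well defined
  (S self-adjoint subspace), and the q_n satisfy the gauge axioms, properness meaning
  that the class of A is zero, i.e. A in M_n(S).\<close>
definition quotient_linf_mos :: "(complex \<Rightarrow> 'v::ab_group_add \<Rightarrow> 'v) \<Rightarrow> ('v \<Rightarrow> 'v) \<Rightarrow>
    (nat \<Rightarrow> (nat \<Rightarrow> nat \<Rightarrow> 'v) \<Rightarrow> real) \<Rightarrow> 'v set \<Rightarrow> bool" where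
  "quotient_linf_mos sc st \<nu> S \<longleftrightarrow> star_space sc st \<and> module.subspace sc S \<and>
     (\<forall>x\<in>S. st x \<in> S) \<and>
     mos_gauges sc st (qgauge st \<nu> S) (\<lambda>n A. \<forall>i j. A i j \<in> S)"

end

theory Submission
  imports Defs
begin

(*
  Kernels: if \<phi> kills a\<^sub>j and b\<^sub>j, then \<omega>\<^sub>1(\<phi> x) \<le> C \<nu>\<^sub>1(x - a\<^sub>j) \<rightarrow> 0 and
  \<omega>\<^sub>1(-\<phi> x) \<le> C \<nu>\<^sub>1(b\<^sub>j - x) \<rightarrow> 0, so \<phi> x = 0 by properness of \<omega>.

  Quotients: each gauge axiom passes to the infimum over representatives; for direct
  sums one compresses to the two diagonal blocks. For properness, if q(A) = q(-A) = 0
  then every compression X\<^sup>*AX to a column X with entries of modulus at most 1 is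
  approximated in \<nu>\<^sub>1 from above and from below by self-adjoint elements of S,
  hence lies in S by the gauge ideal property; polarization then puts every entry
  of A into S.
*)

lemma sum_single_nonzero:
  assumes "i < (n::nat)" and "\<And>q. q < n \<Longrightarrow> q \<noteq> i \<Longrightarrow> h q = 0"
  shows "(\<Sum>q<n. h q) = (h i :: 'a::comm_monoid_add)"
proof -
  have "(\<Sum>q<n. h q) = (\<Sum>q\<in>{i}. h q)"
    by (rule sum.mono_neutral_right) (use assms in auto)
  thus ?thesis by simp
qed

lemma sum_two_nonzero:
  assumes "i < (n::nat)" "j < n" "i \<noteq> j" and "\<And>q. q < n \<Longrightarrow> q \<noteq> i \<Longrightarrow> q \<noteq> j \<Longrightarrow> h q = 0"
  shows "(\<Sum>q<n. h q) = h i + (h j :: 'a::comm_monoid_add)"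
proof -
  have "(\<Sum>q<n. h q) = (\<Sum>q\<in>{i, j}. h q)"
    by (rule sum.mono_neutral_right) (use assms in auto)
  thus ?thesis using assms(3) by simp
qed

lemma opnorm_sq_le:
  assumes "0 \<le> M"
    and "\<And>v. (\<Sum>j<k. (cmod (v j))\<^sup>2) \<le> 1 \<Longrightarrow> (\<Sum>i<n. (cmod (\<Sum>j<k. X i j * v j))\<^sup>2) \<le> M\<^sup>2"
  shows "(opnorm n k X)\<^sup>2 \<le> M\<^sup>2"
proof -
  let ?T = "{sqrt (\<Sum>i<n. (cmod (\<Sum>j<k. X i j * v j))\<^sup>2) | v. (\<Sum>j<k. (cmod (v j))\<^sup>2) \<le> 1}"
  have ub: "x \<le> M" if "x \<in> ?T" for x
  proof -
    from that obtain v where v: "(\<Sum>j<k. (cmod (v j))\<^sup>2) \<le> 1"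
      and x: "x = sqrt (\<Sum>i<n. (cmod (\<Sum>j<k. X i j * v j))\<^sup>2)" by blast
    have "x \<le> sqrt (M\<^sup>2)" unfolding x using assms(2)[OF v] real_sqrt_le_mono by blast
    thus ?thesis using assms(1) by simp
  qed
  have zero: "0 \<in> ?T"
    by (intro CollectI exI[of _ "\<lambda>_. 0"]) simp
  have "0 \<le> opnorm n k X" unfolding opnorm_def
    by (rule cSup_upper[OF zero]) (use ub in \<open>intro bdd_aboveI\<close>)
  moreover have "opnorm n k X \<le> M" unfolding opnorm_def
    by (rule cSup_least) (use zero ub in auto)
  ultimately show ?thesis by (simp add: power_mono)
qed

lemma opnorm_column_sq_le:
  assumes "\<And>p. cmod (X p 0) \<le> 1"
  shows "(opnorm n 1 X)\<^sup>2 \<le> real n"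
proof -
  have "(opnorm n 1 X)\<^sup>2 \<le> (sqrt (real n))\<^sup>2"
  proof (rule opnorm_sq_le)
    fix v :: "nat \<Rightarrow> complex"
    assume "(\<Sum>j<1. (cmod (v j))\<^sup>2) \<le> 1"
    hence v: "cmod (v 0) \<le> 1" by (simp add: abs_square_le_1)
    have "(cmod (X i 0 * v 0))\<^sup>2 \<le> 1" for i
      using assms[of i] v by (simp add: norm_mult mult_le_one abs_square_le_1)
    hence "(\<Sum>i<n. (cmod (\<Sum>j<1. X i j * v j))\<^sup>2) \<le> (\<Sum>i<n. 1)"
      by (intro sum_mono) simp
    thus "(\<Sum>i<n. (cmod (\<Sum>j<1. X i j * v j))\<^sup>2) \<le> (sqrt (real n))\<^sup>2" by simp
  qed simp
  thus ?thesis by simp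
qed

definition coord_embedding :: "nat \<Rightarrow> nat \<Rightarrow> nat \<Rightarrow> nat \<Rightarrow> complex" where
  "coord_embedding s m = (\<lambda>i j. if i = j + s \<and> j < m then 1 else 0)"

lemma opnorm_coord_embedding_sq_le:
  assumes "s + m \<le> N"
  shows "(opnorm N m (coord_embedding s m))\<^sup>2 \<le> 1"
proof -
  have "(opnorm N m (coord_embedding s m))\<^sup>2 \<le> 1\<^sup>2"
  proof (rule opnorm_sq_le)
    fix v :: "nat \<Rightarrow> complex"
    assume v: "(\<Sum>j<m. (cmod (v j))\<^sup>2) \<le> 1"
    let ?f = "\<lambda>i. (cmod (\<Sum>j<m. coord_embedding s m i j * v j))\<^sup>2"
    have f_shift: "?f (j + s) = (cmod (v j))\<^sup>2" if "j < m" for j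
      by (subst sum_single_nonzero[of j]) (use that in \<open>auto simp: coord_embedding_def\<close>)
    have f_out: "?f i = 0" if "i \<notin> (\<lambda>j. j + s) ` {..<m}" for i
      by (subst sum.neutral) (use that in \<open>auto simp: coord_embedding_def\<close>)
    have "(\<Sum>i<N. ?f i) = (\<Sum>i\<in>(\<lambda>j. j + s) ` {..<m}. ?f i)"
      by (rule sum.mono_neutral_right) (use assms f_out in auto)
    also have "\<dots> = (\<Sum>j<m. (cmod (v j))\<^sup>2)"
      by (subst sum.reindex) (auto simp: inj_on_def f_shift)
    finally show "(\<Sum>i<N. ?f i) \<le> 1\<^sup>2" using v by simp
  qed simp
  thus ?thesis by simp
qed

context
  fixes sc :: "complex \<Rightarrow> 'v::ab_group_add \<Rightarrow> 'v"
  assumes vector_space: "vector_space sc"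
begin

interpretation vector_space sc by (fact vector_space)

lemma compress_coord_embedding:
  assumes "s + m \<le> N"
  shows "compress sc N m (coord_embedding s m) D =
    (\<lambda>a b. if a < m \<and> b < m then D (a + s) (b + s) else 0)"
proof -
  have "(\<Sum>i<N. \<Sum>j<N. sc (cnj (coord_embedding s m i a) * coord_embedding s m j b) (D i j))
      = D (a + s) (b + s)"
    if "a < m" "b < m" for a b
  proof -
    have inner: "(\<Sum>j<N. sc (cnj (coord_embedding s m i a) * coord_embedding s m j b) (D i j))
        = sc (cnj (coord_embedding s m i a)) (D i (b + s))" for i
      by (subst sum_single_nonzero[of "b + s"]) (use assms that in \<open>auto simp: coord_embedding_def\<close>)
    show ?thesis unfolding inner
      by (subst sum_single_nonzero[of "a + s"]) (use assms that in \<open>auto simp: coord_embedding_def\<close>)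
  qed
  thus ?thesis by (auto simp: compress_def fun_eq_iff)
qed

lemma compress_dsum_fst: "is_mat n A \<Longrightarrow> compress sc (n + k) n (coord_embedding 0 n) (dsum n k A B) = A"
  by (subst compress_coord_embedding) (auto simp: dsum_def is_mat_def fun_eq_iff)

lemma compress_dsum_snd: "is_mat k B \<Longrightarrow> compress sc (n + k) k (coord_embedding n k) (dsum n k A B) = B"
  by (subst compress_coord_embedding) (auto simp: dsum_def is_mat_def fun_eq_iff)

lemma compress_unit_column:
  assumes "i < n"
  shows "compress sc n 1 (\<lambda>p _. if p = i then 1 else 0) A 0 0 = A i i"
proof -
  have inner: "(\<Sum>q<n. sc (cnj (if p = i then 1 else 0) * (if q = i then 1 else 0)) (A p q)) =
      sc (cnj (if p = i then 1 else 0)) (A p i)" for p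
    by (subst sum_single_nonzero[of i]) (use assms in auto)
  show ?thesis unfolding compress_def using assms
    by (simp only: inner) (subst sum_single_nonzero[of i], auto)
qed

lemma compress_two_entry_column:
  assumes ij: "i < n" "j < n" "i \<noteq> j"
  shows "compress sc n 1 (\<lambda>p _. if p = i then \<alpha> else if p = j then \<beta> else 0) A 0 0 =
    (sc (cnj \<alpha> * \<alpha>) (A i i) + sc (cnj \<alpha> * \<beta>) (A i j)) +
    (sc (cnj \<beta> * \<alpha>) (A j i) + sc (cnj \<beta> * \<beta>) (A j j))"
proof -
  let ?X = "\<lambda>p. if p = i then \<alpha> else if p = j then \<beta> else 0"
  have inner: "(\<Sum>q<n. sc (cnj (?X p) * ?X q) (A p q)) =
      sc (cnj (?X p) * \<alpha>) (A p i) + sc (cnj (?X p) * \<beta>) (A p j)" for p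
    by (subst sum_two_nonzero[of i n j]) (use ij in auto)
  show ?thesis unfolding compress_def inner
    by (simp, subst sum_two_nonzero[of i n j]) (use ij in auto)
qed

lemma compress_msub: "msub (compress sc n k X B) (compress sc n k X A) = compress sc n k X (msub B A)"
  by (simp add: msub_def compress_def fun_eq_iff scale_right_diff_distrib sum_subtractf)

lemma msub_mscale: "msub (mscale sc c B) (mscale sc c A) = mscale sc c (msub B A)"
  by (simp add: msub_def mscale_def fun_eq_iff scale_right_diff_distrib)

lemma compress_mneg: "compress sc n k X (mneg A) = mneg (compress sc n k X A)"
  by (simp add: compress_def mneg_def fun_eq_iff sum_negf)

lemma compress_in_subspace:
  "subspace S \<Longrightarrow> (\<And>i j. A i j \<in> S) \<Longrightarrow> compress sc n k X A a b \<in> S"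
  by (auto simp: compress_def intro!: subspace_sum subspace_scale subspace_0)

text \<open>Polarization: the compressions to the columns \<open>e\<^sub>i + e\<^sub>j\<close> and
  \<open>e\<^sub>i + \<i> e\<^sub>j\<close> give \<open>A\<^sub>i\<^sub>j + A\<^sub>j\<^sub>i\<close> and
  \<open>\<i> (A\<^sub>i\<^sub>j - A\<^sub>j\<^sub>i)\<close> up to diagonal entries.\<close>
lemma entry_in_subspace_if_column_compressions_in:
  assumes S: "subspace S" and A: "is_mat n A"
    and compr: "\<And>X. (\<And>p. cmod (X p 0) \<le> 1) \<Longrightarrow> compress sc n 1 X A 0 0 \<in> S"
  shows "A i j \<in> S"
proof (cases "i < n \<and> j < n")
  case False
  then show ?thesis using A subspace_0[OF S] unfolding is_mat_def by metis
next
  case True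
  have diag: "A p p \<in> S" if "p < n" for p
    using compr[of "\<lambda>q _. if q = p then 1 else 0"] compress_unit_column[OF that] by simp
  show ?thesis
  proof (cases "i = j")
    case True
    then show ?thesis using diag \<open>i < n \<and> j < n\<close> by blast
  next
    case False
    have ij: "i < n" "j < n" "i \<noteq> j" using True False by auto
    have off_diag: "u + v \<in> S" if "(A i i + u) + (v + A j j) \<in> S" for u v
    proof -
      have "u + v = ((A i i + u) + (v + A j j)) - A i i - A j j" by (simp add: algebra_simps)
      thus ?thesis using that diag ij subspace_diff[OF S] by metis
    qed
    have "(A i i + A i j) + (A j i + A j j) \<in> S"
      using compr[of "\<lambda>p _. if p = i then 1 else if p = j then 1 else 0"]
        compress_two_entry_column[OF ij, of 1 1 A] by simp
    hence sum_in: "A i j + A j i \<in> S" by (rule off_diag)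
    have "(A i i + sc \<i> (A i j)) + (sc (- \<i>) (A j i) + A j j) \<in> S"
      using compr[of "\<lambda>p _. if p = i then 1 else if p = j then \<i> else 0"]
        compress_two_entry_column[OF ij, of 1 \<i> A] by simp
    hence "sc \<i> (A i j) + sc (- \<i>) (A j i) \<in> S" by (rule off_diag)
    moreover have "sc (- \<i>) (sc \<i> (A i j) + sc (- \<i>) (A j i)) = A i j - A j i"
      by (simp add: scale_right_distrib scale_right_diff_distrib)
    ultimately have diff_in: "A i j - A j i \<in> S"
      by (metis subspace_scale[OF S])
    have "A i j = sc (1/2) (A i j + A j i) + sc (1/2) (A i j - A j i)"
      by (simp add: scale_right_distrib scale_right_diff_distrib flip: scale_left_distrib)
    then show ?thesis
      using sum_in diff_in subspace_add[OF S] subspace_scale[OF S] by metis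
  qed
qed

lemma qmap_eq_qmap_0_iff:
  assumes S: "subspace S"
  shows "qmap S x = qmap S 0 \<longleftrightarrow> x \<in> S"
proof
  assume "qmap S x = qmap S 0"
  moreover have "x + 0 \<in> qmap S x" unfolding qmap_def using subspace_0[OF S] by blast
  ultimately show "x \<in> S" by (simp add: qmap_def)
next
  assume x: "x \<in> S"
  have "s \<in> (+) x ` S" if "s \<in> S" for s
    using subspace_diff[OF S that x] by (intro image_eqI[of _ _ "s - x"]) simp_all
  with x show "qmap S x = qmap S 0"
    by (auto simp: qmap_def intro: subspace_add[OF S])
qed

end

lemma msub_self [simp]: "msub (A :: nat \<Rightarrow> nat \<Rightarrow> 'a::group_add) A = (\<lambda>i j. 0)"
  by (simp add: msub_def)

lemma msub_madd:
  "msub (madd B1 B2) (madd (A1 :: nat \<Rightarrow> nat \<Rightarrow> 'a::ab_group_add) A2) = madd (msub B1 A1) (msub B2 A2)"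
  by (simp add: msub_def madd_def fun_eq_iff algebra_simps)

lemma msub_dsum:
  "msub (dsum n k B1 B2) (dsum n k (A1 :: nat \<Rightarrow> nat \<Rightarrow> 'a::group_add) A2) = dsum n k (msub B1 A1) (msub B2 A2)"
  by (simp add: msub_def dsum_def fun_eq_iff)

lemma m1_compress: "m1 (compress sc n 1 X B 0 0) = compress sc n 1 X B"
  by (auto simp: m1_def compress_def fun_eq_iff)

lemma mmap_m1: "f 0 = 0 \<Longrightarrow> mmap f (m1 x) = m1 (f x)"
  by (auto simp: mmap_def m1_def fun_eq_iff)

lemma mneg_m1: "mneg (m1 (x :: 'a::group_add)) = m1 (- x)"
  by (auto simp: mneg_def m1_def fun_eq_iff)

lemma sa_mat_m1_iff:
  assumes "st 0 = 0"
  shows "sa_mat st 1 (m1 x) \<longleftrightarrow> st x = x"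
  using assms by (auto simp: sa_mat_def is_mat_def mstar_def m1_def fun_eq_iff dest: spec2[of _ 0 0])

locale mos_sa_subspace = vector_space sc for sc :: "complex \<Rightarrow> 'v::ab_group_add \<Rightarrow> 'v" +
  fixes st :: "'v \<Rightarrow> 'v" and \<nu> :: "nat \<Rightarrow> (nat \<Rightarrow> nat \<Rightarrow> 'v) \<Rightarrow> real" and S :: "'v set"
  assumes mos: "linf_mos sc st \<nu>"
    and subspace: "subspace S"
    and star_closed: "x \<in> S \<Longrightarrow> st x \<in> S"
begin

abbreviation q :: "nat \<Rightarrow> (nat \<Rightarrow> nat \<Rightarrow> 'v) \<Rightarrow> real" where
  "q \<equiv> qgauge st \<nu> S"

lemma st_st [simp]: "st (st x) = x"
  and st_add [simp]: "st (x + y) = st x + st y"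
  and st_scale: "st (sc c x) = sc (cnj c) (st x)"
  using mos unfolding linf_mos_def star_space_def by auto

interpretation st: additive st by standard simp

lemmas st_0 [simp] = st.zero and st_minus [simp] = st.minus and st_diff [simp] = st.diff
  and st_sum = st.sum

lemma gauges: "mos_gauges sc st \<nu> (\<lambda>n A. A = (\<lambda>i j. 0))"
  using mos unfolding linf_mos_def by auto

lemma gauge_nonneg: "n \<ge> 1 \<Longrightarrow> sa_mat st n A \<Longrightarrow> 0 \<le> \<nu> n A"
  and gauge_add: "n \<ge> 1 \<Longrightarrow> sa_mat st n A \<Longrightarrow> sa_mat st n B \<Longrightarrow> \<nu> n (madd A B) \<le> \<nu> n A + \<nu> n B"
  and gauge_scale: "n \<ge> 1 \<Longrightarrow> sa_mat st n A \<Longrightarrow> t > 0 \<Longrightarrow>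
    \<nu> n (mscale sc (complex_of_real t) A) = t * \<nu> n A"
  and gauge_compress: "n \<ge> 1 \<Longrightarrow> k \<ge> 1 \<Longrightarrow> sa_mat st n A \<Longrightarrow>
    \<nu> k (compress sc n k X A) \<le> (opnorm n k X)\<^sup>2 * \<nu> n A"
  and gauge_dsum: "n \<ge> 1 \<Longrightarrow> k \<ge> 1 \<Longrightarrow> sa_mat st n A \<Longrightarrow> sa_mat st k B \<Longrightarrow>
    \<nu> (n + k) (dsum n k A B) = max (\<nu> n A) (\<nu> k B)"
  using gauges unfolding mos_gauges_def by (elim conjE; simp)+

lemmas S_0 [simp] = subspace_0[OF subspace] and S_add = subspace_add[OF subspace]
  and S_neg = subspace_neg[OF subspace]
  and S_scale = subspace_scale[OF subspace]

lemma sa_zero [simp]: "sa_mat st n (\<lambda>i j. 0)"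
  by (simp add: sa_mat_def is_mat_def mstar_def)

lemma sa_in_S_zero [simp]: "sa_mat_in st n S (\<lambda>i j. 0)"
  by (simp add: sa_mat_in_def)

lemma sa_madd: "sa_mat st n A \<Longrightarrow> sa_mat st n B \<Longrightarrow> sa_mat st n (madd A B)"
  by (auto simp: sa_mat_def is_mat_def mstar_def madd_def fun_eq_iff)

lemma sa_mneg: "sa_mat st n A \<Longrightarrow> sa_mat st n (mneg A)"
  by (auto simp: sa_mat_def is_mat_def mstar_def mneg_def fun_eq_iff)

lemma sa_mscale: "sa_mat st n A \<Longrightarrow> sa_mat st n (mscale sc (complex_of_real t) A)"
  by (auto simp: sa_mat_def is_mat_def mstar_def mscale_def fun_eq_iff st_scale)

lemma sa_dsum: "sa_mat st n A \<Longrightarrow> sa_mat st k B \<Longrightarrow> sa_mat st (n + k) (dsum n k A B)"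
  by (auto simp: sa_mat_def is_mat_def mstar_def dsum_def fun_eq_iff)

lemma sa_compress:
  assumes "sa_mat st n A"
  shows "sa_mat st k (compress sc n k X A)"
proof -
  have A_adj: "st (A i j) = A j i" for i j
    using assms unfolding sa_mat_def mstar_def by metis
  have "st (\<Sum>i<n. \<Sum>j<n. sc (cnj (X i b) * X j a) (A i j)) =
        (\<Sum>i<n. \<Sum>j<n. sc (cnj (X i a) * X j b) (A i j))" for a b
    by (simp add: st_sum st_scale A_adj, subst sum.swap) (simp add: mult.commute)
  then show ?thesis
    by (auto simp: sa_mat_def is_mat_def mstar_def compress_def fun_eq_iff)
qed

lemma sa_in_S_madd: "sa_mat_in st n S A \<Longrightarrow> sa_mat_in st n S B \<Longrightarrow> sa_mat_in st n S (madd A B)"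
  by (auto simp: sa_mat_in_def sa_madd) (auto simp: madd_def intro: S_add)

lemma sa_in_S_mscale: "sa_mat_in st n S A \<Longrightarrow> sa_mat_in st n S (mscale sc (complex_of_real t) A)"
  by (auto simp: sa_mat_in_def sa_mscale) (auto simp: mscale_def intro: S_scale)

lemma sa_in_S_dsum: "sa_mat_in st n S A \<Longrightarrow> sa_mat_in st k S B \<Longrightarrow> sa_mat_in st (n + k) S (dsum n k A B)"
  by (auto simp: sa_mat_in_def sa_dsum) (auto simp: dsum_def)

lemma sa_in_S_compress: "sa_mat_in st n S A \<Longrightarrow> sa_mat_in st k S (compress sc n k X A)"
  by (auto simp: sa_mat_in_def sa_compress intro: compress_in_subspace[OF vector_space_axioms subspace])

lemma qgauge_le:
  assumes "n \<ge> 1" "sa_mat st n B" "sa_mat_in st n S (msub B A)"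
  shows "q n A \<le> \<nu> n B"
  unfolding qgauge_def
proof (rule cInf_lower)
  show "bdd_below {\<nu> n B |B. sa_mat st n B \<and> sa_mat_in st n S (msub B A)}"
    using assms(1) gauge_nonneg by (intro bdd_belowI[where m = 0]) blast
qed (use assms in blast)

lemma qgauge_greatest:
  assumes "sa_mat st n A" and "\<And>B. sa_mat st n B \<Longrightarrow> sa_mat_in st n S (msub B A) \<Longrightarrow> c \<le> \<nu> n B"
  shows "c \<le> q n A"
  unfolding qgauge_def
  by (rule cInf_greatest) (use assms sa_in_S_zero msub_self in \<open>fastforce+\<close>)

lemma qgauge_less_witness:
  assumes "sa_mat st n A" "q n A < c"
  obtains B where "sa_mat st n B" "sa_mat_in st n S (msub B A)" "\<nu> n B < c"
proof -
  have "{\<nu> n B |B. sa_mat st n B \<and> sa_mat_in st n S (msub B A)} \<noteq> {}"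
    using assms(1) sa_in_S_zero msub_self by fastforce
  from cInf_lessD[OF this assms(2)[unfolded qgauge_def]] show thesis
    using that by blast
qed

lemma qgauge_nonneg: "n \<ge> 1 \<Longrightarrow> sa_mat st n A \<Longrightarrow> 0 \<le> q n A"
  by (rule qgauge_greatest) (auto intro: gauge_nonneg)

lemma qgauge_le_gauge: "n \<ge> 1 \<Longrightarrow> sa_mat st n A \<Longrightarrow> q n A \<le> \<nu> n A"
  by (rule qgauge_le) auto

lemma qgauge_add:
  assumes n: "n \<ge> 1" and A1: "sa_mat st n A1" and A2: "sa_mat st n A2"
  shows "q n (madd A1 A2) \<le> q n A1 + q n A2"
proof -
  have sum_bound: "q n (madd A1 A2) \<le> \<nu> n B1 + \<nu> n B2"
    if "sa_mat st n B1" "sa_mat_in st n S (msub B1 A1)"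
      "sa_mat st n B2" "sa_mat_in st n S (msub B2 A2)" for B1 B2
  proof -
    have "q n (madd A1 A2) \<le> \<nu> n (madd B1 B2)"
      by (rule qgauge_le) (use n that in \<open>auto simp: sa_madd sa_in_S_madd msub_madd\<close>)
    also have "\<dots> \<le> \<nu> n B1 + \<nu> n B2" by (rule gauge_add) (use n that in auto)
    finally show ?thesis .
  qed
  have "q n (madd A1 A2) - \<nu> n B2 \<le> q n A1"
    if "sa_mat st n B2" "sa_mat_in st n S (msub B2 A2)" for B2
    by (rule qgauge_greatest[OF A1]) (use sum_bound that in force)
  hence "q n (madd A1 A2) - q n A1 \<le> q n A2"
    by (intro qgauge_greatest[OF A2]) force
  thus ?thesis by simp
qed

lemma qgauge_scale_le:
  assumes n: "n \<ge> 1" and A: "sa_mat st n A" and t: "t > 0"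
  shows "q n (mscale sc (complex_of_real t) A) \<le> t * q n A"
proof -
  have "q n (mscale sc (complex_of_real t) A) / t \<le> q n A"
  proof (rule qgauge_greatest[OF A])
    fix B assume B: "sa_mat st n B" "sa_mat_in st n S (msub B A)"
    have "q n (mscale sc (complex_of_real t) A) \<le> \<nu> n (mscale sc (complex_of_real t) B)"
      by (rule qgauge_le) (use n B in \<open>auto simp: sa_mscale sa_in_S_mscale msub_mscale[OF vector_space_axioms]\<close>)
    also have "\<dots> = t * \<nu> n B" using n B t by (simp add: gauge_scale)
    finally show "q n (mscale sc (complex_of_real t) A) / t \<le> \<nu> n B"
      using t by (simp add: field_simps)
  qed
  thus ?thesis using t by (simp add: field_simps)
qed

lemma qgauge_scale:
  assumes n: "n \<ge> 1" and A: "sa_mat st n A" and t: "t > 0"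
  shows "q n (mscale sc (complex_of_real t) A) = t * q n A"
proof (rule antisym)
  show "q n (mscale sc (complex_of_real t) A) \<le> t * q n A"
    using assms by (rule qgauge_scale_le)
  have inverse: "mscale sc (complex_of_real (1 / t)) (mscale sc (complex_of_real t) A) = A"
    using t by (simp add: mscale_def fun_eq_iff)
  have "q n (mscale sc (complex_of_real (1 / t)) (mscale sc (complex_of_real t) A))
      \<le> (1 / t) * q n (mscale sc (complex_of_real t) A)"
    by (rule qgauge_scale_le[OF n sa_mscale[OF A]]) (use t in simp)
  hence "q n A \<le> (1 / t) * q n (mscale sc (complex_of_real t) A)"
    unfolding inverse .
  thus "t * q n A \<le> q n (mscale sc (complex_of_real t) A)"
    using t by (simp add: field_simps)
qed

lemma qgauge_compress:
  assumes n: "n \<ge> 1" and k: "k \<ge> 1" and A: "sa_mat st n A"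
    and c: "0 \<le> c" "(opnorm n k X)\<^sup>2 \<le> c"
  shows "q k (compress sc n k X A) \<le> c * q n A"
proof -
  have bound: "q k (compress sc n k X A) \<le> c * \<nu> n B"
    if B: "sa_mat st n B" "sa_mat_in st n S (msub B A)" for B
  proof -
    have "q k (compress sc n k X A) \<le> \<nu> k (compress sc n k X B)"
      by (rule qgauge_le)
        (use k B in \<open>auto simp: sa_compress sa_in_S_compress
          compress_msub[OF vector_space_axioms]\<close>)
    also have "\<dots> \<le> (opnorm n k X)\<^sup>2 * \<nu> n B" by (rule gauge_compress) (use n k B in auto)
    also have "\<dots> \<le> c * \<nu> n B" using c gauge_nonneg[OF n B(1)] by (intro mult_right_mono) auto
    finally show ?thesis .
  qed
  show ?thesis
  proof (cases "c = 0")
    case True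
    then show ?thesis using bound[of A] A by simp
  next
    case False
    hence "q k (compress sc n k X A) / c \<le> q n A"
      by (intro qgauge_greatest[OF A]) (use bound c in \<open>auto simp: field_simps\<close>)
    then show ?thesis using c False by (simp add: field_simps)
  qed
qed

lemma qgauge_dsum_le:
  assumes n: "n \<ge> 1" and k: "k \<ge> 1" and A: "sa_mat st n A" and B: "sa_mat st k B"
  shows "q (n + k) (dsum n k A B) \<le> max (q n A) (q k B)"
proof (rule ccontr)
  assume "\<not> ?thesis"
  hence "q n A < q (n + k) (dsum n k A B)" "q k B < q (n + k) (dsum n k A B)"
    by auto
  then obtain B1 B2 where
    B1: "sa_mat st n B1" "sa_mat_in st n S (msub B1 A)" "\<nu> n B1 < q (n + k) (dsum n k A B)" and
    B2: "sa_mat st k B2" "sa_mat_in st k S (msub B2 B)" "\<nu> k B2 < q (n + k) (dsum n k A B)"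
    using qgauge_less_witness[OF A] qgauge_less_witness[OF B] by metis
  have "q (n + k) (dsum n k A B) \<le> \<nu> (n + k) (dsum n k B1 B2)"
    by (rule qgauge_le) (use n B1 B2 in \<open>auto simp: sa_dsum sa_in_S_dsum msub_dsum\<close>)
  also have "\<dots> = max (\<nu> n B1) (\<nu> k B2)" using n k B1 B2 by (simp add: gauge_dsum)
  finally show False using B1 B2 by linarith
qed

lemma qgauge_dsum:
  assumes n: "n \<ge> 1" and k: "k \<ge> 1" and A: "sa_mat st n A" and B: "sa_mat st k B"
  shows "q (n + k) (dsum n k A B) = max (q n A) (q k B)"
proof -
  have D: "sa_mat st (n + k) (dsum n k A B)" using A B by (rule sa_dsum)
  have "q n (compress sc (n + k) n (coord_embedding 0 n) (dsum n k A B)) \<le> 1 * q (n + k) (dsum n k A B)"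
    by (rule qgauge_compress) (use n k D opnorm_coord_embedding_sq_le[of 0 n "n + k"] in auto)
  hence "q n A \<le> q (n + k) (dsum n k A B)"
    using A by (simp add: compress_dsum_fst[OF vector_space_axioms] sa_mat_def)
  moreover have "q k (compress sc (n + k) k (coord_embedding n k) (dsum n k A B)) \<le> 1 * q (n + k) (dsum n k A B)"
    by (rule qgauge_compress) (use n k D opnorm_coord_embedding_sq_le[of n k "n + k"] in auto)
  hence "q k B \<le> q (n + k) (dsum n k A B)"
    using B by (simp add: compress_dsum_snd[OF vector_space_axioms] sa_mat_def)
  ultimately show ?thesis using qgauge_dsum_le[OF n k A B] by linarith
qed

end

locale mos_gauge_ideal = mos_sa_subspace +
  assumes gauge_ideal: "gauge_ideal {x. st x = x} (\<lambda>x. \<nu> 1 (m1 x)) (S \<inter> {x. st x = x})"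
begin

lemma compression_approx_from_S:
  assumes n: "n \<ge> 1" and A: "sa_mat st n A" and q0: "q n A = 0"
    and X: "\<And>p. cmod (X p 0) \<le> 1"
  obtains a where "\<And>m. a m \<in> S \<inter> {x. st x = x}"
    and "(\<lambda>m. \<nu> 1 (m1 (compress sc n 1 X A 0 0 - a m))) \<longlonglongrightarrow> 0"
proof -
  have "\<forall>m. \<exists>B. sa_mat st n B \<and> sa_mat_in st n S (msub B A) \<and> \<nu> n B < inverse (real (Suc m))"
  proof
    fix m
    have "q n A < inverse (real (Suc m))" using q0 by simp
    then obtain B where "sa_mat st n B" "sa_mat_in st n S (msub B A)" "\<nu> n B < inverse (real (Suc m))"
      by (rule qgauge_less_witness[OF A])
    then show "\<exists>B. sa_mat st n B \<and> sa_mat_in st n S (msub B A) \<and> \<nu> n B < inverse (real (Suc m))"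
      by blast
  qed
  from choice[OF this] obtain B where "\<forall>m. sa_mat st n (B m) \<and> sa_mat_in st n S (msub (B m) A) \<and>
      \<nu> n (B m) < inverse (real (Suc m))"
    by blast
  hence B: "\<And>m. sa_mat st n (B m)" "\<And>m. sa_mat_in st n S (msub (B m) A)"
    "\<And>m. \<nu> n (B m) < inverse (real (Suc m))"
    by auto
  define y where "y = compress sc n 1 X A 0 0"
  define a where "a m = y - compress sc n 1 X (B m) 0 0" for m
  have compress_adj: "st (compress sc n 1 X C 0 0) = compress sc n 1 X C 0 0" if "sa_mat st n C" for C
    using sa_compress[OF that, of 1 X] unfolding sa_mat_def mstar_def by metis
  have "compress sc n 1 X (msub (B m) A) 0 0 = compress sc n 1 X (B m) 0 0 - y" for m
    unfolding y_def compress_msub[OF vector_space_axioms, symmetric] by (simp add: msub_def)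
  hence "a m = - compress sc n 1 X (msub (B m) A) 0 0" for m
    by (simp add: a_def)
  moreover have "compress sc n 1 X (msub (B m) A) 0 0 \<in> S" for m
    using B(2) unfolding sa_mat_in_def by (blast intro: compress_in_subspace[OF vector_space_axioms subspace])
  ultimately have "a m \<in> S" for m
    by (simp add: S_neg)
  moreover have "st (a m) = a m" for m
    using compress_adj[OF A] compress_adj[OF B(1)] by (simp add: a_def y_def)
  ultimately have a_in: "a m \<in> S \<inter> {x. st x = x}" for m
    by blast
  have y_minus_a: "m1 (y - a m) = compress sc n 1 X (B m)" for m
    using m1_compress[of sc n X "B m"] by (simp add: a_def)
  have bound: "\<nu> 1 (m1 (y - a m)) \<le> real n * inverse (real (Suc m))" for m
  proof -
    have "\<nu> 1 (m1 (y - a m)) \<le> (opnorm n 1 X)\<^sup>2 * \<nu> n (B m)"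
      unfolding y_minus_a by (rule gauge_compress) (use n B in auto)
    also have "\<dots> \<le> real n * inverse (real (Suc m))"
      using opnorm_column_sq_le[of X n, OF X] gauge_nonneg[OF n B(1)] B(3)[of m]
      by (intro mult_mono) auto
    finally show ?thesis .
  qed
  have nonneg: "0 \<le> \<nu> 1 (m1 (y - a m))" for m
    unfolding y_minus_a by (rule gauge_nonneg) (simp_all add: sa_compress B(1))
  have "(\<lambda>m. real n * inverse (real (Suc m))) \<longlonglongrightarrow> 0"
    using tendsto_mult[OF tendsto_const LIMSEQ_inverse_real_of_nat, of "real n"] by simp
  hence "(\<lambda>m. \<nu> 1 (m1 (y - a m))) \<longlonglongrightarrow> 0"
    by (rule tendsto_sandwich[rotated 2, OF tendsto_const]) (use bound nonneg in auto)
  with a_in show thesis using that unfolding y_def by blast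
qed

text \<open>Approximating \<open>A\<close> and \<open>-A\<close> gives the two one-sided approximations
  required by the gauge ideal property.\<close>
lemma column_compression_in_S:
  assumes n: "n \<ge> 1" and A: "sa_mat st n A" and q0: "q n A = 0" "q n (mneg A) = 0"
    and X: "\<And>p. cmod (X p 0) \<le> 1"
  shows "compress sc n 1 X A 0 0 \<in> S"
proof -
  define y where "y = compress sc n 1 X A 0 0"
  obtain a where a: "\<And>m. a m \<in> S \<inter> {x. st x = x}" "(\<lambda>m. \<nu> 1 (m1 (y - a m))) \<longlonglongrightarrow> 0"
    using compression_approx_from_S[of n A X, OF n A q0(1) X] unfolding y_def by blast
  obtain a' where a': "\<And>m. a' m \<in> S \<inter> {x. st x = x}"
    "(\<lambda>m. \<nu> 1 (m1 (compress sc n 1 X (mneg A) 0 0 - a' m))) \<longlonglongrightarrow> 0"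
    using compression_approx_from_S[of n "mneg A" X, OF n sa_mneg[OF A] q0(2) X] by blast
  have "compress sc n 1 X (mneg A) 0 0 - a' m = - a' m - y" for m
    unfolding compress_mneg[OF vector_space_axioms]
    by (simp only: y_def mneg_def diff_conv_add_uminus add.commute)
  hence b: "(\<lambda>m. \<nu> 1 (m1 (- a' m - y))) \<longlonglongrightarrow> 0"
    using a'(2) by presburger
  have "- a' m \<in> S \<inter> {x. st x = x}" for m using a'(1)[of m] by (simp add: S_neg)
  moreover have "st y = y"
    using sa_compress[OF A, of 1 X] unfolding y_def sa_mat_def mstar_def by metis
  ultimately show ?thesis
    using gauge_ideal[unfolded gauge_ideal_def, rule_format, of y a "\<lambda>m. - a' m"] a b
    unfolding y_def by blast
qed

lemma qgauge_proper:
  assumes "n \<ge> 1" "sa_mat st n A" "q n A = 0" "q n (mneg A) = 0"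
  shows "A i j \<in> S"
proof (rule entry_in_subspace_if_column_compressions_in[OF vector_space_axioms subspace])
  show "is_mat n A" using assms(2) unfolding sa_mat_def by blast
  show "compress sc n 1 X A 0 0 \<in> S" if "\<And>p. cmod (X p 0) \<le> 1" for X
    using column_compression_in_S[of n A X, OF assms that] .
qed

lemma quotient_is_linf_mos: "quotient_linf_mos sc st \<nu> S"
proof -
  have "mos_gauges sc st q (\<lambda>n A. \<forall>i j. A i j \<in> S)"
    unfolding mos_gauges_def
  proof (intro conjI allI impI)
    fix n k :: nat and X A
    assume "n \<ge> 1" "k \<ge> 1" "sa_mat st n A"
    then show "q k (compress sc n k X A) \<le> (opnorm n k X)\<^sup>2 * q n A"
      by (intro qgauge_compress) auto
  qed (simp_all add: qgauge_nonneg qgauge_add qgauge_scale qgauge_proper qgauge_dsum)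
  then show ?thesis
    using mos subspace star_closed
    unfolding quotient_linf_mos_def linf_mos_def by blast
qed

end

lemma kernel_is_mos_ideal:
  fixes scW :: "complex \<Rightarrow> 'w::ab_group_add \<Rightarrow> 'w"
  assumes V: "linf_mos scV stV \<nu>" and S: "module.subspace scV S"
    and W: "linf_mos scW stW \<omega>" and \<phi>: "cg_bounded scV stV \<nu> scW stW \<omega> \<phi>"
    and ker: "{x. \<phi> x = 0} = S"
  shows "mos_ideal scV stV \<nu> S"
proof -
  interpret lin: Vector_Spaces.linear scV scW \<phi>
    using \<phi> unfolding cg_bounded_def by blast
  interpret stV: additive stV using V unfolding linf_mos_def star_space_def by unfold_locales auto
  interpret stW: additive stW using W unfolding linf_mos_def star_space_def by unfold_locales auto
  have \<phi>_star: "\<phi> (stV x) = stW (\<phi> x)" for x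
    using \<phi> unfolding cg_bounded_def by blast
  obtain C where C: "\<And>n A. n \<ge> 1 \<Longrightarrow> sa_mat stV n A \<Longrightarrow> \<omega> n (mmap \<phi> A) \<le> C * \<nu> n A"
    using \<phi> unfolding cg_bounded_def by blast
  have \<omega>_nonneg: "0 \<le> \<omega> 1 M" and \<omega>_proper: "\<omega> 1 M = 0 \<Longrightarrow> \<omega> 1 (mneg M) = 0 \<Longrightarrow> M = (\<lambda>i j. 0)"
    if "sa_mat stW 1 M" for M
    using W that unfolding linf_mos_def mos_gauges_def by auto
  have star_closed: "stV x \<in> S" if "x \<in> S" for x
    using that ker by (auto simp: \<phi>_star stW.zero)
  have "x \<in> S" if x: "stV x = x" and a: "\<And>j. a j \<in> S \<inter> {x. stV x = x}"
    and b: "\<And>j. b j \<in> S \<inter> {x. stV x = x}"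
    and a_lim: "(\<lambda>j. \<nu> 1 (m1 (x - a j))) \<longlonglongrightarrow> 0" and b_lim: "(\<lambda>j. \<nu> 1 (m1 (b j - x))) \<longlonglongrightarrow> 0"
    for x a b
  proof -
    have null_bound: "\<omega> 1 M \<le> 0" if "\<And>j. \<omega> 1 M \<le> C * g j" "g \<longlonglongrightarrow> 0" for M g
      using LIMSEQ_le_const[OF tendsto_mult[OF tendsto_const that(2)], of "\<omega> 1 M" C] that(1) by auto
    have \<phi>_a: "\<phi> (a j) = 0" and \<phi>_b: "\<phi> (b j) = 0" for j
      using a b ker by blast+
    have sa_V: "sa_mat stV 1 (m1 (x - a j))" "sa_mat stV 1 (m1 (b j - x))" for j
      unfolding sa_mat_m1_iff[of stV, OF stV.zero] using a b x by (simp_all add: stV.diff)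
    have "\<omega> 1 (m1 (\<phi> x)) \<le> C * \<nu> 1 (m1 (x - a j))" for j
      using C[OF _ sa_V(1)] by (simp add: mmap_m1 lin.diff \<phi>_a lin.zero)
    hence "\<omega> 1 (m1 (\<phi> x)) \<le> 0" using a_lim by (rule null_bound)
    moreover have "\<omega> 1 (mneg (m1 (\<phi> x))) \<le> C * \<nu> 1 (m1 (b j - x))" for j
      using C[OF _ sa_V(2)] by (simp add: mmap_m1 mneg_m1 lin.diff \<phi>_b lin.zero)
    hence "\<omega> 1 (mneg (m1 (\<phi> x))) \<le> 0" using b_lim by (rule null_bound)
    moreover have "stW (\<phi> x) = \<phi> x" using x by (simp flip: \<phi>_star)
    hence sa_W: "sa_mat stW 1 (m1 (\<phi> x))" "sa_mat stW 1 (mneg (m1 (\<phi> x)))"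
      unfolding mneg_m1 sa_mat_m1_iff[of stW, OF stW.zero] by (simp_all add: stW.minus)
    ultimately have "m1 (\<phi> x) = (\<lambda>i j. 0)"
      using \<omega>_nonneg[OF sa_W(1)] \<omega>_nonneg[OF sa_W(2)] \<omega>_proper[OF sa_W(1)] by simp
    hence "\<phi> x = 0" unfolding m1_def by metis
    thus ?thesis using ker by blast
  qed
  thus ?thesis
    using S star_closed unfolding mos_ideal_def gauge_ideal_def by blast
qed

theorem theorem3p20:
  fixes scV :: "complex \<Rightarrow> 'v::ab_group_add \<Rightarrow> 'v"
    and stV :: "'v \<Rightarrow> 'v"
    and \<nu> :: "nat \<Rightarrow> (nat \<Rightarrow> nat \<Rightarrow> 'v) \<Rightarrow> real"
    and S :: "'v set"
  assumes V: "linf_mos scV stV \<nu>"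
    and S: "module.subspace scV S"
  shows "(\<forall>(scW :: complex \<Rightarrow> 'w::ab_group_add \<Rightarrow> 'w) stW \<omega> \<phi>.
            linf_mos scW stW \<omega> \<and> cg_bounded scV stV \<nu> scW stW \<omega> \<phi> \<and> {x. \<phi> x = 0} = S
            \<longrightarrow> mos_ideal scV stV \<nu> S)
       \<and> (mos_ideal scV stV \<nu> S \<longrightarrow>
            quotient_linf_mos scV stV \<nu> S \<and>
            (\<forall>n\<ge>1. \<forall>A. sa_mat stV n A \<longrightarrow> qgauge stV \<nu> S n A \<le> \<nu> n A) \<and>
            {x. qmap S x = qmap S 0} = S)"
proof (intro conjI impI allI)
  fix scW :: "complex \<Rightarrow> 'w::ab_group_add \<Rightarrow> 'w" and stW \<omega> \<phi>
  assume "linf_mos scW stW \<omega> \<and> cg_bounded scV stV \<nu> scW stW \<omega> \<phi> \<and> {x. \<phi> x = 0} = S"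
  then show "mos_ideal scV stV \<nu> S"
    using kernel_is_mos_ideal[OF V S] by blast
next
  assume ideal: "mos_ideal scV stV \<nu> S"
  have vs: "vector_space scV"
    using V unfolding linf_mos_def star_space_def by blast
  interpret mos_gauge_ideal scV stV \<nu> S
    using ideal V S vs unfolding mos_ideal_def
    by (intro mos_gauge_ideal.intro mos_sa_subspace.intro mos_gauge_ideal_axioms.intro
        mos_sa_subspace_axioms.intro) auto
  show "quotient_linf_mos scV stV \<nu> S"
    by (rule quotient_is_linf_mos)
  show "qgauge stV \<nu> S n A \<le> \<nu> n A" if "1 \<le> n" "sa_mat stV n A" for n A
    using qgauge_le_gauge that .
  show "{x. qmap S x = qmap S 0} = S"
    using qmap_eq_qmap_0_iff[OF vs S] by blast
qed

end
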